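(* Let $\mathcal R$ be a reaction network and $\mathcal U=\mathcal U_1\cup\mathcal U_2\subseteq\mathcal S$ with $\mathcal U_1\cap\mathcal U_2=\emptyset$. Suppose $\mathcal U_1$ is eliminable in $\mathcal R$ with respect to $\mathcal F_1\subseteq\mathcal R_{\mathcal U_1}$, $\mathcal U_2$ is eliminable in $\mathcal R$ with respect to $\mathcal F_2\subseteq\mathcal R_{\mathcal U_2}$, and $(\mathcal R_{\mathcal U_1}\cup\mathcal R_{\mathcal U_1}')\cap(\mathcal R_{\mathcal U_2}\cup\mathcal R_{\mathcal U_2}')=\emptyset$. Then $\mathcal U$ is eliminable in $\mathcal R$ with respect to $\mathcal F=\mathcal F_1\cup\mathcal F_2$.
   Context: Species $S_1,\dots,S_n$ are the unit vectors of $\mathbb{N}_0^n$ and $\mathcal S=\{S_1,\dots,S_n\}$; for $x\in\mathbb{N}_0^n$, $\mathrm{supp}(x)=\{S_k: x^k>0\}$. A reaction network (RN) is a (possibly infinite) subset $\mathcal R\subseteq\mathbb{N}_0^n\times\mathbb{N}_0^n$ containing no $(y,y')$ with $y=y'$; elements $(y,y')$ are reactions $y\to y'$ with reactant $y$ and product $y'$. For $r_1=(y_1,y_1'),\ r_2=(y_2,y_2')$ define $r_1\oplus r_2=(y_1+0\vee(y_2-y_1'),\ y_2'+0\vee(y_1'-y_2))$ ($\vee$ componentwise maximum); it is associative. $\mathrm{cl}(A)$ is the set of all finite $\oplus$-sums of elements of $A$, including $(0,0)$. For $\mathcal U\subseteq\mathcal S$ and a set $B\subseteq\mathbb{N}_0^n\times\mathbb{N}_0^n$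 write $B_{\mathcal U}=\{(y,y')\in B:\mathrm{supp}(y)\cap\mathcal U\neq\emptyset\}$ and $B_{\mathcal U}'=\{(y,y')\in B:\mathrm{supp}(y')\cap\mathcal U\neq\emptyset\}$. Set $\overline{\mathcal R}=\mathrm{cl}(\mathcal R)$ and $\overline{\mathcal R}_0=\overline{\mathcal R}\setminus(\overline{\mathcal R}_{\mathcal U}\cup\overline{\mathcal R}_{\mathcal U}')$ (for the relevant $\mathcal U$). A set $\mathcal U\subseteq\mathcal S$ is eliminable in $\mathcal R$ with respect to $\mathcal F\subseteq\mathcal R_{\mathcal U}$ if for every $r_0\in\mathcal R_{\mathcal U}'$ and every $r_1\in\mathrm{cl}(\mathcal F)$ with $r_0\oplus r_1\notin\overline{\mathcal R}_{\mathcal U}$ there exists $r_2\in\mathrm{cl}(\mathcal F)$ with $r_0\oplus r_1\oplus r_2\in\overline{\mathcal R}_0$. *)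

theory Defs
  imports Main
begin

(* Species are indexed by a finite type 's (species S_k <-> index k);
   complexes are vectors in N_0^S, i.e. functions 's => nat. *)
type_synonym 's complex = "'s \<Rightarrow> nat"
type_synonym 's reaction = "'s complex \<times> 's complex"

definition supp :: "'s complex \<Rightarrow> 's set" where
  "supp x = {k. x k > 0}"

definition reaction_network :: "'s reaction set \<Rightarrow> bool" where
  "reaction_network R \<longleftrightarrow> (\<forall>(y, y') \<in> R. y \<noteq> y')"

(* r1 (+) r2 = (y1 + 0 \<or> (y2 - y1'), y2' + 0 \<or> (y1' - y2)); truncated nat
   subtraction a - b equals max 0 (a - b) componentwise *)
definition oplus :: "'s reaction \<Rightarrow> 's reaction \<Rightarrow> 's reaction" (infixl "\<oplus>" 65) where
  "r1 \<oplus> r2 = (case r1 of (y1, y1') \<Rightarrow> case r2 of (y2, y2') \<Rightarrow>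
      (\<lambda>k. y1 k + max 0 (y2 k - y1' k), \<lambda>k. y2' k + max 0 (y1' k - y2 k)))"

inductive_set cl :: "'s reaction set \<Rightarrow> 's reaction set" for A where
  cl_zero: "(\<lambda>_. 0, \<lambda>_. 0) \<in> cl A"
| cl_step: "r \<in> cl A \<Longrightarrow> a \<in> A \<Longrightarrow> r \<oplus> a \<in> cl A"

definition react_U :: "'s set \<Rightarrow> 's reaction set \<Rightarrow> 's reaction set" where
  "react_U U B = {(y, y') \<in> B. supp y \<inter> U \<noteq> {}}"

definition prod_U :: "'s set \<Rightarrow> 's reaction set \<Rightarrow> 's reaction set" where
  "prod_U U B = {(y, y') \<in> B. supp y' \<inter> U \<noteq> {}}"

definition cl0 :: "'s set \<Rightarrow> 's reaction set \<Rightarrow> 's reaction set" where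
  "cl0 U R = cl R - (react_U U (cl R) \<union> prod_U U (cl R))"

definition eliminable :: "'s set \<Rightarrow> 's reaction set \<Rightarrow> 's reaction set \<Rightarrow> bool" where
  "eliminable U R F \<longleftrightarrow> F \<subseteq> react_U U R \<and>
     (\<forall>r0 \<in> prod_U U R. \<forall>r1 \<in> cl F. r0 \<oplus> r1 \<notin> react_U U (cl R) \<longrightarrow>
        (\<exists>r2 \<in> cl F. r0 \<oplus> r1 \<oplus> r2 \<in> cl0 U R))"

end

theory Submission
  imports Defs
begin

text \<open>Suppose \<open>r\<^sub>0\<close> produces a species of \<open>U\<^sub>1\<close>. By the disjointness hypothesis, \<open>r\<^sub>0\<close> and every
  reaction of \<open>F\<^sub>1\<close> neither consume nor produce species of \<open>U\<^sub>2\<close>, while every reaction of \<open>F\<^sub>2\<close>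
  consumes one. Hence if \<open>r\<^sub>0 \<oplus> r\<^sub>1\<close> with \<open>r\<^sub>1 \<in> cl (F\<^sub>1 \<union> F\<^sub>2)\<close> consumes no species of \<open>U\<close>,
  then \<open>r\<^sub>1\<close> uses no reaction of \<open>F\<^sub>2\<close>: the first one would have to consume a \<open>U\<^sub>2\<close>-species
  that nothing before it produced. Eliminability of \<open>U\<^sub>1\<close> then supplies \<open>r\<^sub>2 \<in> cl F\<^sub>1\<close>, and
  \<open>r\<^sub>0 \<oplus> r\<^sub>1 \<oplus> r\<^sub>2\<close>, being built from reactions avoiding \<open>U\<^sub>2\<close>, avoids all of \<open>U\<close>.
  The case where \<open>r\<^sub>0\<close> produces a species of \<open>U\<^sub>2\<close> is symmetric.\<close>

lemma fst_oplus [simp]: "fst (r1 \<oplus> r2) k = fst r1 k + (fst r2 k - snd r1 k)"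
  by (cases r1, cases r2) (simp add: oplus_def)

lemma snd_oplus [simp]: "snd (r1 \<oplus> r2) k = snd r2 k + (snd r1 k - fst r2 k)"
  by (cases r1, cases r2) (simp add: oplus_def)

lemma reaction_eqI:
  "(\<And>k. fst r k = fst r' k) \<Longrightarrow> (\<And>k. snd r k = snd r' k) \<Longrightarrow> r = (r' :: 's reaction)"
  by (rule prod_eqI) (auto intro: ext)

lemma oplus_assoc: "r1 \<oplus> (r2 \<oplus> r3) = r1 \<oplus> r2 \<oplus> (r3 :: 's reaction)"
  by (rule reaction_eqI; simp; arith)

lemma oplus_zero_right [simp]: "r \<oplus> (\<lambda>_. 0, \<lambda>_. 0) = r"
  by (rule reaction_eqI) simp_all

lemma oplus_zero_left [simp]: "(\<lambda>_. 0, \<lambda>_. 0) \<oplus> r = r"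
  by (rule reaction_eqI) simp_all

lemma cl_mono: "A \<subseteq> B \<Longrightarrow> cl A \<subseteq> cl B"
proof
  fix r assume "A \<subseteq> B" and "r \<in> cl A"
  from \<open>r \<in> cl A\<close> show "r \<in> cl B"
    by (induction r rule: cl.induct) (use \<open>A \<subseteq> B\<close> in \<open>auto intro: cl.intros\<close>)
qed

lemma cl_oplus_closed: "r2 \<in> cl A \<Longrightarrow> r1 \<in> cl A \<Longrightarrow> r1 \<oplus> r2 \<in> cl A"
proof (induction r2 rule: cl.induct)
  case cl_zero then show ?case by simp
next
  case (cl_step r a) then show ?case by (metis oplus_assoc cl.cl_step)
qed

lemma cl_base: "a \<in> A \<Longrightarrow> a \<in> cl A"
  by (metis cl.cl_step cl.cl_zero oplus_zero_left)

lemma mem_react_U: "r \<in> react_U U B \<longleftrightarrow> r \<in> B \<and> (\<exists>k\<in>U. fst r k > 0)"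
  by (cases r) (auto simp: react_U_def supp_def)

lemma mem_prod_U: "r \<in> prod_U U B \<longleftrightarrow> r \<in> B \<and> (\<exists>k\<in>U. snd r k > 0)"
  by (cases r) (auto simp: prod_U_def supp_def)

definition avoids :: "'s set \<Rightarrow> 's reaction \<Rightarrow> bool" where
  "avoids U r \<longleftrightarrow> (\<forall>k\<in>U. fst r k = 0 \<and> snd r k = 0)"

lemma mem_cl0: "r \<in> cl0 U R \<longleftrightarrow> r \<in> cl R \<and> avoids U r"
  by (auto simp: cl0_def mem_react_U mem_prod_U avoids_def)

lemma avoids_Un: "avoids (U1 \<union> U2) r \<longleftrightarrow> avoids U1 r \<and> avoids U2 r"
  by (auto simp: avoids_def)

lemma avoids_oplus: "avoids U r1 \<Longrightarrow> avoids U r2 \<Longrightarrow> avoids U (r1 \<oplus> r2)"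
  by (simp add: avoids_def)

lemma cl_avoids: "r \<in> cl A \<Longrightarrow> (\<And>a. a \<in> A \<Longrightarrow> avoids U a) \<Longrightarrow> avoids U r"
  by (induction r rule: cl.induct) (auto simp: avoids_def)

lemma avoids_of_disjoint_react_prod:
  assumes "r \<in> react_U U1 R \<union> prod_U U1 R"
    and "(react_U U1 R \<union> prod_U U1 R) \<inter> (react_U U2 R \<union> prod_U U2 R) = {}"
  shows "avoids U2 r"
proof -
  have "r \<in> R"
    using assms(1) by (auto simp: mem_react_U mem_prod_U)
  moreover have "r \<notin> react_U U2 R \<union> prod_U U2 R"
    using assms by blast
  ultimately have "\<forall>k\<in>U2. \<not> fst r k > 0 \<and> \<not> snd r k > 0"
    by (simp add: mem_react_U mem_prod_U)
  then show ?thesis by (simp add: avoids_def)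
qed

lemma cl_Un_in_cl_or_consumes:
  assumes "r \<in> cl (F \<union> G)"
    and F: "\<And>a. a \<in> F \<Longrightarrow> avoids U a"
    and G: "\<And>a. a \<in> G \<Longrightarrow> \<exists>k\<in>U. fst a k > 0"
    and x: "\<forall>k\<in>U. snd x k = 0"
  shows "r \<in> cl F \<or> (\<exists>k\<in>U. fst (x \<oplus> r) k > 0)"
  using assms(1)
proof (induction r rule: cl.induct)
  case cl_zero then show ?case by (simp add: cl.cl_zero)
next
  case (cl_step r a)
  have consumes_mono: "\<exists>k\<in>U. fst (x \<oplus> (r \<oplus> a)) k > 0" if "\<exists>k\<in>U. fst (x \<oplus> r) k > 0"
    using that unfolding oplus_assoc by (metis add_gr_0 fst_oplus)
  from cl_step.IH show ?case
  proof
    assume r: "r \<in> cl F"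
    show ?case
    proof (cases "a \<in> F")
      case True
      then show ?thesis using r by (blast intro: cl.cl_step)
    next
      case False
      then obtain k where k: "k \<in> U" "fst a k > 0" using G cl_step.hyps(2) by blast
      have "snd (x \<oplus> r) k = 0"
        using cl_avoids[OF r F] x k(1) by (simp add: avoids_def)
      then have "fst (x \<oplus> (r \<oplus> a)) k > 0"
        using k(2) unfolding oplus_assoc fst_oplus by simp
      then show ?thesis using k(1) by blast
    qed
  qed (use consumes_mono in blast)
qed

lemma eliminable_Un_produced_left:
  assumes F1: "F1 \<subseteq> react_U U1 R" and F2: "F2 \<subseteq> react_U U2 R"
    and el: "eliminable U1 R F1"
    and disj: "(react_U U1 R \<union> prod_U U1 R) \<inter> (react_U U2 R \<union> prod_U U2 R) = {}"
    and r0: "r0 \<in> prod_U U1 R" and r1: "r1 \<in> cl (F1 \<union> F2)"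
    and not_consumed: "r0 \<oplus> r1 \<notin> react_U (U1 \<union> U2) (cl R)"
  shows "\<exists>r2 \<in> cl (F1 \<union> F2). r0 \<oplus> r1 \<oplus> r2 \<in> cl0 (U1 \<union> U2) R"
proof -
  have F1_avoids: "avoids U2 a" if "a \<in> F1" for a
    using that F1 disj by (blast intro: avoids_of_disjoint_react_prod)
  have r0_avoids: "avoids U2 r0"
    using r0 disj by (blast intro: avoids_of_disjoint_react_prod)
  have "r0 \<oplus> r1 \<in> cl R"
  proof (rule cl_oplus_closed)
    show "r0 \<in> cl R" using r0 by (simp add: mem_prod_U cl_base)
    have "F1 \<union> F2 \<subseteq> R" using F1 F2 by (auto simp: mem_react_U)
    then show "r1 \<in> cl R" using r1 cl_mono by blast
  qed
  then have no_fst: "\<forall>k\<in>U1 \<union> U2. fst (r0 \<oplus> r1) k = 0"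
    using not_consumed by (auto simp: mem_react_U simp del: fst_oplus)
  have "r1 \<in> cl F1 \<or> (\<exists>k\<in>U2. fst (r0 \<oplus> r1) k > 0)"
    by (rule cl_Un_in_cl_or_consumes[OF r1 F1_avoids])
      (use F2 r0_avoids in \<open>auto simp: mem_react_U avoids_def\<close>)
  then have r1_F1: "r1 \<in> cl F1"
    using no_fst by fastforce
  moreover have "r0 \<oplus> r1 \<notin> react_U U1 (cl R)"
    using no_fst by (auto simp: mem_react_U simp del: fst_oplus)
  ultimately obtain r2 where r2: "r2 \<in> cl F1" and "r0 \<oplus> r1 \<oplus> r2 \<in> cl0 U1 R"
    using el r0 unfolding eliminable_def by blast
  moreover have "avoids U2 (r0 \<oplus> r1 \<oplus> r2)"
    using r0_avoids cl_avoids[OF r1_F1 F1_avoids] cl_avoids[OF r2 F1_avoids]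
    by (simp add: avoids_oplus)
  ultimately have "r0 \<oplus> r1 \<oplus> r2 \<in> cl0 (U1 \<union> U2) R"
    by (simp add: mem_cl0 avoids_Un)
  moreover have "r2 \<in> cl (F1 \<union> F2)"
    using r2 cl_mono[of F1 "F1 \<union> F2"] by blast
  ultimately show ?thesis by blast
qed

theorem proposition4p6:
  fixes R F1 F2 :: "('s::finite) reaction set" and U1 U2 :: "'s set"
  assumes "reaction_network R"
    and "U1 \<inter> U2 = {}"
    and "F1 \<subseteq> react_U U1 R" and "F2 \<subseteq> react_U U2 R"
    and "eliminable U1 R F1" and "eliminable U2 R F2"
    and "(react_U U1 R \<union> prod_U U1 R) \<inter> (react_U U2 R \<union> prod_U U2 R) = {}"
  shows "eliminable (U1 \<union> U2) R (F1 \<union> F2)"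
  unfolding eliminable_def
proof (intro conjI ballI impI)
  show "F1 \<union> F2 \<subseteq> react_U (U1 \<union> U2) R"
    using assms(3,4) by (auto simp: react_U_def)
next
  fix r0 r1
  assume r0: "r0 \<in> prod_U (U1 \<union> U2) R" and r1: "r1 \<in> cl (F1 \<union> F2)"
    and not_consumed: "r0 \<oplus> r1 \<notin> react_U (U1 \<union> U2) (cl R)"
  from r0 consider "r0 \<in> prod_U U1 R" | "r0 \<in> prod_U U2 R"
    by (auto simp: mem_prod_U)
  then show "\<exists>r2\<in>cl (F1 \<union> F2). r0 \<oplus> r1 \<oplus> r2 \<in> cl0 (U1 \<union> U2) R"
  proof cases
    case 1
    then show ?thesis
      using eliminable_Un_produced_left[OF assms(3-5,7) _ r1 not_consumed] by blast
  next
    case 2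
    then show ?thesis
      using eliminable_Un_produced_left[of F2 U2 R F1 U1 r0 r1] assms(3,4,6,7) r1 not_consumed
      by (simp add: Un_commute Int_commute)
  qed
qed

end
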